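(* For every sequence ${\mathbf s}$ in $\widehat{\mathcal S}$ we have $E_T({\mathbf s})=P({\mathbf s})(F_T({\mathbf s}))$. In particular ${\mathcal X}_T({\mathbf s})=P({\mathbf s})({\mathcal Y}_T({\mathbf s}))$.
   Context: $R$ irreducible reduced finite root system (positive roots $R^+$, simple roots $\Pi$, highest root $\gamma$); $\widehat X=X\oplus\mathbb Z$, $\delta=(0,-1)$, affine roots $\widehat R$. $\widehat{\mathcal W}$ generated by $s_{\alpha,n}(v,m)=(v-(\langle\alpha,v\rangle-mn)\alpha^\vee,m)$, acting contragrediently on $\widehat X$; $\widehat{\mathcal S}=\{s_{\alpha,0}:\alpha\in\Pi\}\cup\{s_{\gamma,1}\}$ with simple affine roots $\alpha$ resp. $-\gamma+\delta$. $T$: commutative unital domain, $2$ not a zero divisor, affine roots nonzero in $\widehat X\otimes T$; $S_T$ symmetric algebra of $\widehat X\otimes T$; $Q_T=S_T[2^{-1}][\alpha^{-1}:\alpha\in\widehat R]$. For ${\mathbf s}=(s_1,\dots,s_l)$: $I({\mathbf s})$ = strictly increasing tuples in $\{1,\dots,l\}$, $\operatorname{ev}(i_1,\dots,i_n)=s_{i_1}\cdots s_{i_n}$; ${\mathbf s}'=(s_1,\dots,s_{l-1})$, $I({\mathbf s})=I({\mathbf s}')\sqcup I({\mathbf s}')s_l$ ($\gamma s_l$ = $\gamma$ with $l$ appended); $\Delta(z)_\gamma=\Delta(z)_{\gamma s_l}=z_\gamma$ and $\Delta^-(z)_\gamma=z_\gamma$, $\Delta^-(z)_{\gamma s_l}=-z_\gamma$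 (maps $\bigoplus_{I({\mathbf s}')}Q_T\to\bigoplus_{I({\mathbf s})}Q_T$); every element of $\bigoplus_{I({\mathbf s})}Q_T$ is uniquely $\Delta(x)+\Delta^-(y)$; for an endomorphism $f$ of $\bigoplus_{I({\mathbf s}')}Q_T$, $\Delta^f(\Delta(x)+\Delta^-(y))=\Delta(f(x))+\Delta^-(f(y))$. $c^\lambda$ multiplies the $\sigma$-component by $\operatorname{ev}(\sigma)(\lambda)\otimes1$; $\alpha_l$ = simple affine root of $s_l$. Recursively: ${\mathcal X}_T(\emptyset)=S_T$, ${\mathcal X}_T({\mathbf s})=\Delta({\mathcal X}_T({\mathbf s}'))+c^{\alpha_l}\Delta({\mathcal X}_T({\mathbf s}'))$; ${\mathcal Y}_T(\emptyset)=S_T\subset Q_T$, ${\mathcal Y}_T({\mathbf s})=\Delta({\mathcal Y}_T({\mathbf s}'))+(c^{\alpha_l})^{-1}\Delta({\mathcal Y}_T({\mathbf s}'))$; $E_T(\emptyset)=F_T(\emptyset)=\{1\}$, $E_T({\mathbf s})=\Delta(E_T({\mathbf s}'))\cup c^{\alpha_l}\Delta(E_T({\mathbf s}'))$, $F_T({\mathbf s})=\Delta(F_T({\mathbf s}'))\cup(c^{\alpha_l})^{-1}\Delta(F_T({\mathbf s}'))$ (these are $S_T$-bases of ${\mathcal X}_T({\mathbf s})$, ${\mathcal Y}_T({\mathbf s})$); $P(\emptyset)=\operatorname{id}_{Q_T}$, $P({\mathbf s})=c^{\alpha_l}\circ\Delta^{P({\mathbf s}')}$, an endomorphism of $\bigoplus_{I({\mathbf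 s})}Q_T$. *)

theory Defs
  imports Complex_Main "HOL-Library.Poly_Mapping" "HOL-Library.Option_ord"
    "HOL-Computational_Algebra.Fraction_Field"
begin

section \<open>Root datum: X = Z^'i, dual lattice X^v = Z^'i, standard pairing\<close>

definition pair :: "('i::finite \<Rightarrow> int) \<Rightarrow> ('i \<Rightarrow> int) \<Rightarrow> int" where
  "pair lam v = (\<Sum>i\<in>UNIV. lam i * v i)"

text \<open>reflection s_alpha on X and s_{alpha^v} on X^v; cor = alpha |-> alpha^v\<close>
definition reflX :: "(('i::finite \<Rightarrow> int) \<Rightarrow> ('i \<Rightarrow> int)) \<Rightarrow> ('i \<Rightarrow> int) \<Rightarrow> ('i \<Rightarrow> int) \<Rightarrow> ('i \<Rightarrow> int)" where
  "reflX cor a lam = (\<lambda>i. lam i - pair lam (cor a) * a i)"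

definition reflXv :: "(('i::finite \<Rightarrow> int) \<Rightarrow> ('i \<Rightarrow> int)) \<Rightarrow> ('i \<Rightarrow> int) \<Rightarrow> ('i \<Rightarrow> int) \<Rightarrow> ('i \<Rightarrow> int)" where
  "reflXv cor a v = (\<lambda>i. v i - pair a v * cor a i)"

definition irreducible_reduced_root_datum ::
  "('i::finite \<Rightarrow> int) set \<Rightarrow> (('i \<Rightarrow> int) \<Rightarrow> ('i \<Rightarrow> int)) \<Rightarrow> bool" where
  "irreducible_reduced_root_datum R cor \<longleftrightarrow>
     finite R \<and> R \<noteq> {} \<and> (\<lambda>_. 0) \<notin> R \<and> inj_on cor R \<and>
     (\<forall>a\<in>R. pair a (cor a) = 2) \<and>
     (\<forall>a\<in>R. \<forall>b\<in>R. reflX cor a b \<in> R) \<and>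
     (\<forall>a\<in>R. \<forall>b\<in>R. cor (reflX cor a b) = reflXv cor a (cor b)) \<and>
     \<comment> \<open>reduced\<close>
     (\<forall>a\<in>R. \<forall>b\<in>R. (\<exists>c::rat. \<forall>i. of_int (b i) = c * of_int (a i)) \<longrightarrow> b = a \<or> b = (\<lambda>i. - a i)) \<and>
     \<comment> \<open>irreducible\<close>
     \<not> (\<exists>A B. A \<union> B = R \<and> A \<inter> B = {} \<and> A \<noteq> {} \<and> B \<noteq> {} \<and>
            (\<forall>a\<in>A. \<forall>b\<in>B. pair a (cor b) = 0))"

definition nonneg_comb :: "('i::finite \<Rightarrow> int) set \<Rightarrow> ('i \<Rightarrow> int) \<Rightarrow> bool" where
  "nonneg_comb Pi v \<longleftrightarrow> (\<exists>c. (\<forall>a\<in>Pi. c a \<ge> (0::int)) \<and> v = (\<lambda>i. \<Sum>a\<in>Pi. c a * a i))"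

definition is_base :: "('i::finite \<Rightarrow> int) set \<Rightarrow> ('i \<Rightarrow> int) set \<Rightarrow> bool" where
  "is_base R Pi \<longleftrightarrow> Pi \<subseteq> R \<and>
     (\<forall>c::('i \<Rightarrow> int) \<Rightarrow> int. (\<lambda>i. \<Sum>a\<in>Pi. c a * a i) = (\<lambda>_. 0) \<longrightarrow> (\<forall>a\<in>Pi. c a = 0)) \<and>
     (\<forall>b\<in>R. nonneg_comb Pi b \<or> nonneg_comb Pi (\<lambda>i. - b i))"

definition pos_roots :: "('i::finite \<Rightarrow> int) set \<Rightarrow> ('i \<Rightarrow> int) set \<Rightarrow> ('i \<Rightarrow> int) set" where
  "pos_roots R Pi = {b\<in>R. nonneg_comb Pi b}"

definition highest_root :: "('i::finite \<Rightarrow> int) set \<Rightarrow> ('i \<Rightarrow> int) set \<Rightarrow> ('i \<Rightarrow> int) \<Rightarrow> bool" where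
  "highest_root R Pi g \<longleftrightarrow> g \<in> pos_roots R Pi \<and> (\<forall>b\<in>R. nonneg_comb Pi (\<lambda>i. g i - b i))"

section \<open>Affine data. X-hat = X x Z, delta = (0,-1)\<close>

text \<open>affine roots alpha + k delta, alpha in R, k in Z\<close>
definition affine_roots :: "('i::finite \<Rightarrow> int) set \<Rightarrow> (('i \<Rightarrow> int) \<times> int) set" where
  "affine_roots R = {(a, k) | a k. a \<in> R}"

text \<open>The reflection s_{alpha,n} is encoded by the pair (alpha, n).
  Its contragredient action on X-hat (w.r.t. the pairing <(lam,k),(v,m)> = <lam,v> - k m).\<close>
definition act :: "(('i::finite \<Rightarrow> int) \<Rightarrow> ('i \<Rightarrow> int)) \<Rightarrow> (('i \<Rightarrow> int) \<times> int)
    \<Rightarrow> (('i \<Rightarrow> int) \<times> int) \<Rightarrow> (('i \<Rightarrow> int) \<times> int)" where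
  "act cor s x = (let a = fst s; n = snd s; lam = fst x; k = snd x; p = pair lam (cor a)
                  in ((\<lambda>i. lam i - p * a i), k - n * p))"

definition Shat :: "('i::finite \<Rightarrow> int) set \<Rightarrow> ('i \<Rightarrow> int) \<Rightarrow> (('i \<Rightarrow> int) \<times> int) set" where
  "Shat Pi g = {(a, 0) | a. a \<in> Pi} \<union> {(g, 1)}"

text \<open>simple affine root of a generator: alpha for s_{alpha,0}, -gamma+delta = (-gamma,-1) for s_{gamma,1}\<close>
definition sroot :: "('i::finite \<Rightarrow> int) \<Rightarrow> (('i \<Rightarrow> int) \<times> int) \<Rightarrow> (('i \<Rightarrow> int) \<times> int)" where
  "sroot g s = (if s = (g, 1) then ((\<lambda>i. - g i), -1) else (fst s, 0))"

text \<open>ev(i_1,...,i_n) = s_{i_1} ... s_{i_n}, acting on X-hat (indices 1-based)\<close>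
definition ev :: "(('i::finite \<Rightarrow> int) \<Rightarrow> ('i \<Rightarrow> int)) \<Rightarrow> (('i \<Rightarrow> int) \<times> int) list \<Rightarrow> nat list
    \<Rightarrow> (('i \<Rightarrow> int) \<times> int) \<Rightarrow> (('i \<Rightarrow> int) \<times> int)" where
  "ev cor s sig x = foldr (\<lambda>j y. act cor (s ! (j - 1)) y) sig x"

section \<open>S_T = Sym(X-hat (x) T) = T[x_j : j in 'i option], Q_T inside its fraction field\<close>

type_synonym ('i, 'T) ST = "('i option \<Rightarrow>\<^sub>0 nat) \<Rightarrow>\<^sub>0 'T"

definition var :: "'i option \<Rightarrow> ('i, 'T::comm_ring_1) ST" where
  "var j = Poly_Mapping.single (Poly_Mapping.single j 1) 1"

text \<open>lam (x) 1 in S_T, for lam in X-hat (basis e_i of X indexed by Some i, and (0,1) by None)\<close>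
definition iota :: "(('i::finite \<Rightarrow> int) \<times> int) \<Rightarrow> ('i, 'T::comm_ring_1) ST" where
  "iota x = (\<Sum>i\<in>UNIV. of_int (fst x i) * var (Some i)) + of_int (snd x) * var None"

definition emb :: "('i::{finite,linorder}, 'T::idom) ST \<Rightarrow> ('i, 'T) ST fract" where
  "emb p = Fract p 1"

text \<open>Elements of the direct sum over I(s) are functions on index tuples (nat lists), zero outside I(s)\<close>
type_synonym ('i, 'T) vec = "nat list \<Rightarrow> ('i, 'T) ST fract"

definition Iset :: "nat \<Rightarrow> nat list set" where
  "Iset l = {sig. sorted_wrt (<) sig \<and> set sig \<subseteq> {1..l}}"

definition supp_in :: "nat list set \<Rightarrow> ('i::{finite,linorder}, 'T::idom) vec \<Rightarrow> bool" where
  "supp_in I z \<longleftrightarrow> (\<forall>sig. sig \<notin> I \<longrightarrow> z sig = 0)"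

text \<open>Delta, Delta^- : sum over I(s') --> sum over I(s), where l = length s\<close>
definition Delta :: "nat \<Rightarrow> ('i::{finite,linorder}, 'T::idom) vec \<Rightarrow> ('i, 'T) vec" where
  "Delta l z sig = (if sig \<in> Iset (l - 1) then z sig
      else if sig \<noteq> [] \<and> last sig = l \<and> butlast sig \<in> Iset (l - 1) then z (butlast sig) else 0)"

definition Deltam :: "nat \<Rightarrow> ('i::{finite,linorder}, 'T::idom) vec \<Rightarrow> ('i, 'T) vec" where
  "Deltam l z sig = (if sig \<in> Iset (l - 1) then z sig
      else if sig \<noteq> [] \<and> last sig = l \<and> butlast sig \<in> Iset (l - 1) then - z (butlast sig) else 0)"

definition Deltaf :: "nat \<Rightarrow> (('i::{finite,linorder}, 'T::idom) vec \<Rightarrow> ('i, 'T) vec) \<Rightarrow> ('i, 'T) vec \<Rightarrow> ('i, 'T) vec" where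
  "Deltaf l f z = (THE w. \<exists>x y. supp_in (Iset (l - 1)) x \<and> supp_in (Iset (l - 1)) y \<and>
        z = (\<lambda>sig. Delta l x sig + Deltam l y sig) \<and> w = (\<lambda>sig. Delta l (f x) sig + Deltam l (f y) sig))"

definition cmul :: "(('i::{finite,linorder} \<Rightarrow> int) \<Rightarrow> ('i \<Rightarrow> int)) \<Rightarrow> (('i \<Rightarrow> int) \<times> int) list
    \<Rightarrow> (('i \<Rightarrow> int) \<times> int) \<Rightarrow> ('i, 'T::idom) vec \<Rightarrow> ('i, 'T) vec" where
  "cmul cor s lam z sig = emb (iota (ev cor s sig lam)) * z sig"

definition cinv :: "(('i::{finite,linorder} \<Rightarrow> int) \<Rightarrow> ('i \<Rightarrow> int)) \<Rightarrow> (('i \<Rightarrow> int) \<times> int) list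
    \<Rightarrow> (('i \<Rightarrow> int) \<times> int) \<Rightarrow> ('i, 'T::idom) vec \<Rightarrow> ('i, 'T) vec" where
  "cinv cor s lam z sig = inverse (emb (iota (ev cor s sig lam))) * z sig"

text \<open>The recursions are over the sequence s = (s_1,...,s_l); we recurse on rev s,
  so that the head of the reversed list is s_l and its tail is rev s'.\<close>

definition unitvec :: "('i::{finite,linorder}, 'T::idom) ST fract \<Rightarrow> ('i, 'T) vec" where
  "unitvec q = (\<lambda>sig. if sig = [] then q else 0)"

primrec Prev :: "('i::{finite,linorder} \<Rightarrow> int) \<Rightarrow> (('i \<Rightarrow> int) \<Rightarrow> ('i \<Rightarrow> int))
    \<Rightarrow> (('i \<Rightarrow> int) \<times> int) list \<Rightarrow> ('i, 'T::idom) vec \<Rightarrow> ('i, 'T) vec" where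
  "Prev g cor [] = id"
| "Prev g cor (t # rs) = cmul cor (rev (t # rs)) (sroot g t) \<circ> Deltaf (Suc (length rs)) (Prev g cor rs)"

definition P :: "('i::{finite,linorder} \<Rightarrow> int) \<Rightarrow> (('i \<Rightarrow> int) \<Rightarrow> ('i \<Rightarrow> int))
    \<Rightarrow> (('i \<Rightarrow> int) \<times> int) list \<Rightarrow> ('i, 'T::idom) vec \<Rightarrow> ('i, 'T) vec" where
  "P g cor s = Prev g cor (rev s)"

primrec Erev :: "('i::{finite,linorder} \<Rightarrow> int) \<Rightarrow> (('i \<Rightarrow> int) \<Rightarrow> ('i \<Rightarrow> int))
    \<Rightarrow> (('i \<Rightarrow> int) \<times> int) list \<Rightarrow> ('i, 'T::idom) vec set" where
  "Erev g cor [] = {unitvec 1}"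
| "Erev g cor (t # rs) = Delta (Suc (length rs)) ` Erev g cor rs
     \<union> (cmul cor (rev (t # rs)) (sroot g t) \<circ> Delta (Suc (length rs))) ` Erev g cor rs"

primrec Frev :: "('i::{finite,linorder} \<Rightarrow> int) \<Rightarrow> (('i \<Rightarrow> int) \<Rightarrow> ('i \<Rightarrow> int))
    \<Rightarrow> (('i \<Rightarrow> int) \<times> int) list \<Rightarrow> ('i, 'T::idom) vec set" where
  "Frev g cor [] = {unitvec 1}"
| "Frev g cor (t # rs) = Delta (Suc (length rs)) ` Frev g cor rs
     \<union> (cinv cor (rev (t # rs)) (sroot g t) \<circ> Delta (Suc (length rs))) ` Frev g cor rs"

primrec Xrev :: "('i::{finite,linorder} \<Rightarrow> int) \<Rightarrow> (('i \<Rightarrow> int) \<Rightarrow> ('i \<Rightarrow> int))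
    \<Rightarrow> (('i \<Rightarrow> int) \<times> int) list \<Rightarrow> ('i, 'T::idom) vec set" where
  "Xrev g cor [] = {unitvec (emb p) | p. True}"
| "Xrev g cor (t # rs) = {(\<lambda>sig. Delta (Suc (length rs)) x sig
       + cmul cor (rev (t # rs)) (sroot g t) (Delta (Suc (length rs)) y) sig) | x y.
       x \<in> Xrev g cor rs \<and> y \<in> Xrev g cor rs}"

primrec Yrev :: "('i::{finite,linorder} \<Rightarrow> int) \<Rightarrow> (('i \<Rightarrow> int) \<Rightarrow> ('i \<Rightarrow> int))
    \<Rightarrow> (('i \<Rightarrow> int) \<times> int) list \<Rightarrow> ('i, 'T::idom) vec set" where
  "Yrev g cor [] = {unitvec (emb p) | p. True}"
| "Yrev g cor (t # rs) = {(\<lambda>sig. Delta (Suc (length rs)) x sig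
       + cinv cor (rev (t # rs)) (sroot g t) (Delta (Suc (length rs)) y) sig) | x y.
       x \<in> Yrev g cor rs \<and> y \<in> Yrev g cor rs}"

definition ET where "ET g cor s = Erev g cor (rev s)"
definition FT where "FT g cor s = Frev g cor (rev s)"
definition XT where "XT g cor s = Xrev g cor (rev s)"
definition YT where "YT g cor s = Yrev g cor (rev s)"

end

theory Submission
  imports Defs
begin

text \<open>
  The operator P(s) is diagonal: it multiplies the sigma-component by a scalar. Indeed, as 2 is
  invertible, every vector supported on I(s) is uniquely of the form Delta(x) + Delta^-(y), and for a
  diagonal f the map Delta^f is again diagonal, the weight of sigma being copied to sigma s_l.
  Hence P(s) Delta = c^alpha Delta P(s'), and, since the entries ev(sigma)(alpha_l) (x) 1 of c^alpha
  are images of affine roots and so nonzero, P(s) (c^alpha)^-1 Delta = Delta P(s'). Thus P(s) maps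
  the two halves of the recursive descriptions of F_T(s) and Y_T(s) crosswise onto the two halves of
  those of E_T(s) and X_T(s), and the theorem follows by induction on s.
\<close>

lemma two_neq_zero_fract_ST:
  assumes "(2::'T::idom) \<noteq> 0"
  shows "(2::('i::{finite,linorder},'T) ST fract) \<noteq> 0"
proof -
  have "Poly_Mapping.lookup (2 :: ('i,'T) ST) 0 = 2"
    by (simp only: one_add_one[symmetric] Poly_Mapping.lookup_add Poly_Mapping.lookup_one_zero)
  hence "(2 :: ('i,'T) ST) \<noteq> 0" using assms by auto
  have "(1::('i,'T) ST fract) + 1 = Fract 2 1"
    by (simp add: One_fract_def)
  then have "(2::('i,'T) ST fract) = Fract 2 1"
    by simp
  also have "\<dots> \<noteq> 0"
    using \<open>(2 :: ('i,'T) ST) \<noteq> 0\<close> by (simp add: Zero_fract_def eq_fract)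
  finally show ?thesis .
qed

lemma emb_neq_zero: "p \<noteq> 0 \<Longrightarrow> emb p \<noteq> 0"
  by (simp add: emb_def Zero_fract_def eq_fract)

lemma snoc_Suc_notin_Iset: "sig @ [Suc n] \<notin> Iset n"
  by (simp add: Iset_def)

lemma Iset_Suc_iff:
  "sig \<in> Iset (Suc n) \<longleftrightarrow> sig \<in> Iset n \<or> (sig \<noteq> [] \<and> last sig = Suc n \<and> butlast sig \<in> Iset n)"
proof (cases sig rule: rev_cases)
  case (snoc b c)
  have "b @ [c] \<in> Iset n" if "b @ [c] \<in> Iset (Suc n)" "c \<noteq> Suc n"
  proof -
    have "set (b @ [c]) \<subseteq> {1..Suc n}" "sorted_wrt (<) (b @ [c])"
      using that(1) by (simp_all add: Iset_def)
    moreover have "c \<le> n"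
      using calculation(1) that(2) by auto
    ultimately have "set (b @ [c]) \<subseteq> {1..n}"
      by (fastforce simp: sorted_wrt_append subset_iff)
    then show ?thesis
      using \<open>sorted_wrt (<) (b @ [c])\<close> by (simp add: Iset_def)
  qed
  moreover have "Iset n \<subseteq> Iset (Suc n)"
    by (auto simp: Iset_def)
  moreover have "b @ [Suc n] \<in> Iset (Suc n) \<longleftrightarrow> b \<in> Iset n"
    by (fastforce simp: Iset_def sorted_wrt_append subset_iff)
  ultimately show ?thesis
    using snoc snoc_Suc_notin_Iset[of b n] by (cases "c = Suc n") auto
qed (simp add: Iset_def)

lemma sum_diff_eq_cancel:
  fixes a b c d :: "'a::idom"
  assumes "2 \<noteq> (0::'a)" and "a + b = c + d" and "a - b = c - d"
  shows "a = c \<and> b = d"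
proof -
  have "2 * a = (a + b) + (a - b)"
    by (simp add: algebra_simps)
  also have "\<dots> = (c + d) + (c - d)"
    by (simp only: assms(2,3))
  also have "\<dots> = 2 * c"
    by (simp add: algebra_simps)
  finally have "a = c"
    using assms(1) by simp
  then show ?thesis
    using assms(2) by simp
qed

lemma supp_in_Delta: "supp_in (Iset (Suc n)) (Delta (Suc n) z)"
  by (auto simp: supp_in_def Delta_def Iset_Suc_iff)

lemma supp_in_cinv: "supp_in I z \<Longrightarrow> supp_in I (cinv cor s lam z)"
  by (simp add: supp_in_def cinv_def)

lemma supp_in_add: "supp_in I u \<Longrightarrow> supp_in I v \<Longrightarrow> supp_in I (\<lambda>sig. u sig + v sig)"
  by (simp add: supp_in_def)

lemma Delta_Deltam_decomposition:
  fixes z :: "('i::{finite,linorder}, 'T::idom) vec"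
  assumes two: "(2::('i,'T) ST fract) \<noteq> 0" and z: "supp_in (Iset (Suc n)) z"
  obtains x y where "supp_in (Iset n) x" "supp_in (Iset n) y"
    and "z = (\<lambda>sig. Delta (Suc n) x sig + Deltam (Suc n) y sig)"
proof
  let ?x = "\<lambda>sig. if sig \<in> Iset n then (z sig + z (sig @ [Suc n])) / 2 else 0"
  let ?y = "\<lambda>sig. if sig \<in> Iset n then (z sig - z (sig @ [Suc n])) / 2 else 0"
  show "supp_in (Iset n) ?x" "supp_in (Iset n) ?y"
    by (simp_all add: supp_in_def)
  have "z sig = Delta (Suc n) ?x sig + Deltam (Suc n) ?y sig" for sig
  proof -
    consider "sig \<in> Iset n"
      | "sig \<notin> Iset n" "sig \<noteq> []" "last sig = Suc n" "butlast sig \<in> Iset n"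
      | "sig \<notin> Iset (Suc n)"
      using Iset_Suc_iff by blast
    then show ?thesis
    proof cases
      case 1
      then show ?thesis
        using two by (simp add: Delta_def Deltam_def field_simps)
    next
      case 2
      then have "butlast sig @ [Suc n] = sig"
        by (metis append_butlast_last_id)
      moreover have "(a + b) / 2 - (a - b) / 2 = b" for a b :: "('i,'T) ST fract"
      proof -
        have "(a + b) / 2 - (a - b) / 2 = (2 * b) / 2"
          by (simp add: diff_divide_distrib[symmetric] algebra_simps)
        then show ?thesis
          using two by simp
      qed
      ultimately show ?thesis
        using 2 by (simp add: Delta_def Deltam_def)
    next
      case 3
      then have "(sig \<noteq> [] \<and> last sig = Suc n \<and> butlast sig \<in> Iset n) = False"
        and "(sig \<in> Iset n) = False"
        by (simp_all add: Iset_Suc_iff)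
      moreover have "z sig = 0"
        using z 3 by (simp add: supp_in_def)
      ultimately show ?thesis
        by (simp only: Delta_def Deltam_def diff_Suc_1 if_False add_0)
    qed
  qed
  then show "z = (\<lambda>sig. Delta (Suc n) ?x sig + Deltam (Suc n) ?y sig)" ..
qed

lemma Delta_Deltam_decomposition_unique:
  fixes x1 y1 x2 y2 :: "('i::{finite,linorder}, 'T::idom) vec"
  assumes two: "(2::('i,'T) ST fract) \<noteq> 0"
    and supp: "supp_in (Iset n) x1" "supp_in (Iset n) y1" "supp_in (Iset n) x2" "supp_in (Iset n) y2"
    and eq: "(\<lambda>sig. Delta (Suc n) x1 sig + Deltam (Suc n) y1 sig)
           = (\<lambda>sig. Delta (Suc n) x2 sig + Deltam (Suc n) y2 sig)"
  shows "x1 = x2 \<and> y1 = y2"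
proof -
  have "x1 sig = x2 sig \<and> y1 sig = y2 sig" for sig
  proof (cases "sig \<in> Iset n")
    case True
    moreover have "sig @ [Suc n] \<notin> Iset n"
      by (rule snoc_Suc_notin_Iset)
    ultimately show ?thesis
      using fun_cong[OF eq, of sig] fun_cong[OF eq, of "sig @ [Suc n]"]
      by (intro sum_diff_eq_cancel[OF two]) (simp_all add: Delta_def Deltam_def)
  next
    case False
    then show ?thesis
      using supp by (simp add: supp_in_def)
  qed
  then show ?thesis
    by auto
qed

lemma Deltaf_Delta_Deltam:
  fixes x y :: "('i::{finite,linorder}, 'T::idom) vec"
  assumes two: "(2::('i,'T) ST fract) \<noteq> 0"
    and supp: "supp_in (Iset n) x" "supp_in (Iset n) y"
  shows "Deltaf (Suc n) f (\<lambda>sig. Delta (Suc n) x sig + Deltam (Suc n) y sig)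
       = (\<lambda>sig. Delta (Suc n) (f x) sig + Deltam (Suc n) (f y) sig)"
  unfolding Deltaf_def diff_Suc_1
proof (rule the_equality)
  fix w
  assume "\<exists>x' y'. supp_in (Iset n) x' \<and> supp_in (Iset n) y' \<and>
      (\<lambda>sig. Delta (Suc n) x sig + Deltam (Suc n) y sig) = (\<lambda>sig. Delta (Suc n) x' sig + Deltam (Suc n) y' sig) \<and>
      w = (\<lambda>sig. Delta (Suc n) (f x') sig + Deltam (Suc n) (f y') sig)"
  then show "w = (\<lambda>sig. Delta (Suc n) (f x) sig + Deltam (Suc n) (f y) sig)"
    using Delta_Deltam_decomposition_unique[OF two supp] by blast
qed (use supp in blast)

definition diag :: "(nat list \<Rightarrow> 'a::times) \<Rightarrow> (nat list \<Rightarrow> 'a) \<Rightarrow> nat list \<Rightarrow> 'a" where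
  "diag p z = (\<lambda>sig. p sig * z sig)"

definition extend_weight :: "nat \<Rightarrow> (nat list \<Rightarrow> 'a) \<Rightarrow> nat list \<Rightarrow> 'a" where
  "extend_weight n p sig = (if sig \<in> Iset n then p sig else p (butlast sig))"

lemma Delta_diag: "Delta (Suc n) (diag p x) = diag (extend_weight n p) (Delta (Suc n) x)"
  by (auto simp: Delta_def diag_def extend_weight_def fun_eq_iff)

lemma Deltam_diag: "Deltam (Suc n) (diag p x) = diag (extend_weight n p) (Deltam (Suc n) x)"
  by (auto simp: Deltam_def diag_def extend_weight_def fun_eq_iff)

lemma Deltaf_diag:
  fixes z :: "('i::{finite,linorder}, 'T::idom) vec"
  assumes two: "(2::('i,'T) ST fract) \<noteq> 0"
    and z: "supp_in (Iset (Suc n)) z"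
    and f: "\<And>x. supp_in (Iset n) x \<Longrightarrow> f x = diag p x"
  shows "Deltaf (Suc n) f z = diag (extend_weight n p) z"
proof -
  obtain x y where xy: "supp_in (Iset n) x" "supp_in (Iset n) y"
    and z_eq: "z = (\<lambda>sig. Delta (Suc n) x sig + Deltam (Suc n) y sig)"
    using Delta_Deltam_decomposition[OF two z] .
  show ?thesis
    unfolding z_eq Deltaf_Delta_Deltam[OF two xy] f[OF xy(1)] f[OF xy(2)] Delta_diag Deltam_diag
    by (simp add: diag_def distrib_left)
qed

primrec Prev_weight :: "('i::{finite,linorder} \<Rightarrow> int) \<Rightarrow> (('i \<Rightarrow> int) \<Rightarrow> ('i \<Rightarrow> int))
    \<Rightarrow> (('i \<Rightarrow> int) \<times> int) list \<Rightarrow> nat list \<Rightarrow> ('i, 'T::idom) ST fract" where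
  "Prev_weight g cor [] = (\<lambda>_. 1)"
| "Prev_weight g cor (t # rs) = diag (\<lambda>sig. emb (iota (ev cor (rev (t # rs)) sig (sroot g t))))
     (extend_weight (length rs) (Prev_weight g cor rs))"

lemma Prev_eq_diag:
  fixes z :: "('i::{finite,linorder}, 'T::idom) vec"
  assumes two: "(2::('i,'T) ST fract) \<noteq> 0"
  shows "supp_in (Iset (length rs)) z \<Longrightarrow> Prev g cor rs z = diag (Prev_weight g cor rs) z"
proof (induction rs arbitrary: z)
  case Nil
  then show ?case
    by (simp add: diag_def)
next
  case (Cons t rs)
  have "Deltaf (Suc (length rs)) (Prev g cor rs) z = diag (extend_weight (length rs) (Prev_weight g cor rs)) z"
    using Cons by (intro Deltaf_diag[OF two]) simp_all
  then show ?case
    by (simp add: cmul_def diag_def mult.assoc)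
qed

lemma Prev_add:
  fixes u v :: "('i::{finite,linorder}, 'T::idom) vec"
  assumes two: "(2::('i,'T) ST fract) \<noteq> 0"
    and "supp_in (Iset (length rs)) u" "supp_in (Iset (length rs)) v"
  shows "Prev g cor rs (\<lambda>sig. u sig + v sig) = (\<lambda>sig. Prev g cor rs u sig + Prev g cor rs v sig)"
  using assms by (simp add: Prev_eq_diag supp_in_add diag_def distrib_left)

lemma Prev_Cons_Delta:
  fixes x :: "('i::{finite,linorder}, 'T::idom) vec"
  assumes two: "(2::('i,'T) ST fract) \<noteq> 0" and x: "supp_in (Iset (length rs)) x"
  shows "Prev g cor (t # rs) (Delta (Suc (length rs)) x)
       = cmul cor (rev (t # rs)) (sroot g t) (Delta (Suc (length rs)) (Prev g cor rs x))"
proof -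
  have "Deltaf (Suc (length rs)) (Prev g cor rs) (Delta (Suc (length rs)) x)
      = diag (extend_weight (length rs) (Prev_weight g cor rs)) (Delta (Suc (length rs)) x)"
    by (intro Deltaf_diag[OF two] supp_in_Delta Prev_eq_diag[OF two])
  also have "\<dots> = Delta (Suc (length rs)) (Prev g cor rs x)"
    by (simp add: Delta_diag Prev_eq_diag[OF two x])
  finally show ?thesis
    by simp
qed

lemma Prev_Cons_cinv_Delta:
  fixes x :: "('i::{finite,linorder}, 'T::idom) vec"
  assumes two: "(2::('i,'T) ST fract) \<noteq> 0" and x: "supp_in (Iset (length rs)) x"
    and nz: "\<forall>sig\<in>Iset (Suc (length rs)). emb (iota (ev cor (rev (t # rs)) sig (sroot g t)) :: ('i,'T) ST) \<noteq> 0"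
  shows "Prev g cor (t # rs) (cinv cor (rev (t # rs)) (sroot g t) (Delta (Suc (length rs)) x))
       = Delta (Suc (length rs)) (Prev g cor rs x)"
proof -
  let ?n = "Suc (length rs)" and ?c = "\<lambda>sig. emb (iota (ev cor (rev (t # rs)) sig (sroot g t))) :: ('i,'T) ST fract"
  have "Deltaf ?n (Prev g cor rs) (cinv cor (rev (t # rs)) (sroot g t) (Delta ?n x))
      = diag (extend_weight (length rs) (Prev_weight g cor rs)) (cinv cor (rev (t # rs)) (sroot g t) (Delta ?n x))"
    by (intro Deltaf_diag[OF two] supp_in_cinv supp_in_Delta Prev_eq_diag[OF two])
  moreover have "?c sig * (inverse (?c sig) * Delta ?n x sig) = Delta ?n x sig" for sig
    using nz supp_in_Delta[of "length rs" x] by (cases "sig \<in> Iset ?n") (simp_all add: supp_in_def)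
  ultimately have "Prev g cor (t # rs) (cinv cor (rev (t # rs)) (sroot g t) (Delta ?n x))
      = diag (extend_weight (length rs) (Prev_weight g cor rs)) (Delta ?n x)"
    by (simp add: cmul_def cinv_def diag_def mult.left_commute fun_eq_iff)
  also have "\<dots> = Delta ?n (Prev g cor rs x)"
    by (simp add: Delta_diag Prev_eq_diag[OF two x])
  finally show ?thesis .
qed

lemma supp_in_Frev:
  assumes "f \<in> Frev g cor rs"
  shows "supp_in (Iset (length rs)) f"
proof (cases rs)
  case Nil
  then show ?thesis
    using assms by (auto simp: supp_in_def unitvec_def Iset_def)
next
  case Cons
  then show ?thesis
    using assms by (auto intro: supp_in_Delta supp_in_cinv)
qed

lemma supp_in_Yrev:
  assumes "f \<in> Yrev g cor rs"
  shows "supp_in (Iset (length rs)) f"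
proof (cases rs)
  case Nil
  then show ?thesis
    using assms by (auto simp: supp_in_def unitvec_def Iset_def)
next
  case Cons
  then show ?thesis
    using assms by (auto intro!: supp_in_add supp_in_Delta supp_in_cinv)
qed

lemma Erev_Cons_eq_Prev_image:
  assumes two: "(2::('i::{finite,linorder},'T::idom) ST fract) \<noteq> 0"
    and nz: "\<forall>sig\<in>Iset (Suc (length rs)). emb (iota (ev cor (rev (t # rs)) sig (sroot g t)) :: ('i,'T) ST) \<noteq> 0"
    and IH: "(Erev g cor rs :: ('i,'T) vec set) = Prev g cor rs ` Frev g cor rs"
  shows "(Erev g cor (t # rs) :: ('i,'T) vec set) = Prev g cor (t # rs) ` Frev g cor (t # rs)"
proof -
  let ?D = "Delta (Suc (length rs)) :: ('i,'T) vec \<Rightarrow> _" and ?F = "Frev g cor rs :: ('i,'T) vec set"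
  have "Prev g cor (t # rs) ` ?D ` ?F = (cmul cor (rev (t # rs)) (sroot g t) \<circ> ?D) ` Prev g cor rs ` ?F"
    unfolding image_comp by (intro image_cong refl) (simp only: comp_apply Prev_Cons_Delta[OF two supp_in_Frev])
  moreover have "Prev g cor (t # rs) ` (cinv cor (rev (t # rs)) (sroot g t) \<circ> ?D) ` ?F = ?D ` Prev g cor rs ` ?F"
    unfolding image_comp by (intro image_cong refl) (simp only: comp_apply Prev_Cons_cinv_Delta[OF two supp_in_Frev nz])
  ultimately show ?thesis
    by (simp add: image_Un IH Un_commute)
qed

lemma Xrev_Cons_eq_Prev_image:
  assumes two: "(2::('i::{finite,linorder},'T::idom) ST fract) \<noteq> 0"
    and nz: "\<forall>sig\<in>Iset (Suc (length rs)). emb (iota (ev cor (rev (t # rs)) sig (sroot g t)) :: ('i,'T) ST) \<noteq> 0"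
    and IH: "(Xrev g cor rs :: ('i,'T) vec set) = Prev g cor rs ` Yrev g cor rs"
  shows "(Xrev g cor (t # rs) :: ('i,'T) vec set) = Prev g cor (t # rs) ` Yrev g cor (t # rs)"
proof -
  let ?D = "Delta (Suc (length rs)) :: ('i,'T) vec \<Rightarrow> _"
  have swap: "Prev g cor (t # rs) (\<lambda>sig. ?D x sig + cinv cor (rev (t # rs)) (sroot g t) (?D y) sig)
      = (\<lambda>sig. ?D (Prev g cor rs y) sig + cmul cor (rev (t # rs)) (sroot g t) (?D (Prev g cor rs x)) sig)"
    if "x \<in> Yrev g cor rs" "y \<in> Yrev g cor rs" for x y
  proof -
    have "supp_in (Iset (length (t # rs))) (?D x)"
      and "supp_in (Iset (length (t # rs))) (cinv cor (rev (t # rs)) (sroot g t) (?D y))"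
      by (simp_all add: supp_in_Delta supp_in_cinv)
    note Prev_add[OF two this]
    also note Prev_Cons_Delta[OF two supp_in_Yrev[OF that(1)]]
    also note Prev_Cons_cinv_Delta[OF two supp_in_Yrev[OF that(2)] nz]
    finally show ?thesis
      by (simp only: add.commute)
  qed
  show ?thesis
  proof (intro equalityI subsetI)
    fix w :: "('i,'T) vec"
    assume "w \<in> Xrev g cor (t # rs)"
    then obtain x y where xy: "x \<in> Yrev g cor rs" "y \<in> Yrev g cor rs"
      and "w = (\<lambda>sig. ?D (Prev g cor rs y) sig + cmul cor (rev (t # rs)) (sroot g t) (?D (Prev g cor rs x)) sig)"
      by (auto simp: IH)
    then have "w = Prev g cor (t # rs) (\<lambda>sig. ?D x sig + cinv cor (rev (t # rs)) (sroot g t) (?D y) sig)"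
      by (simp only: swap)
    moreover have "(\<lambda>sig. ?D x sig + cinv cor (rev (t # rs)) (sroot g t) (?D y) sig) \<in> Yrev g cor (t # rs)"
      using xy by auto
    ultimately show "w \<in> Prev g cor (t # rs) ` Yrev g cor (t # rs)"
      by (rule image_eqI)
  next
    fix w :: "('i,'T) vec"
    assume "w \<in> Prev g cor (t # rs) ` Yrev g cor (t # rs)"
    then obtain x y where xy: "x \<in> Yrev g cor rs" "y \<in> Yrev g cor rs"
      and "w = Prev g cor (t # rs) (\<lambda>sig. ?D x sig + cinv cor (rev (t # rs)) (sroot g t) (?D y) sig)"
      by auto
    then have "w = (\<lambda>sig. ?D (Prev g cor rs y) sig + cmul cor (rev (t # rs)) (sroot g t) (?D (Prev g cor rs x)) sig)"
      by (simp only: swap)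
    then show "w \<in> Xrev g cor (t # rs)"
      using xy by (auto simp: IH)
  qed
qed

lemma affine_roots_iff: "v \<in> affine_roots R \<longleftrightarrow> fst v \<in> R"
  by (cases v) (auto simp: affine_roots_def)

lemma fst_act: "fst (act cor t v) = reflX cor (fst t) (fst v)"
  by (simp add: act_def reflX_def Let_def)

lemma ev_in_affine_roots:
  assumes refl_closed: "\<forall>a\<in>R. \<forall>b\<in>R. reflX cor a b \<in> R"
    and s: "\<forall>t\<in>set s. fst t \<in> R" and v: "v \<in> affine_roots R"
    and sig: "set sig \<subseteq> {1..length s}"
  shows "ev cor s sig v \<in> affine_roots R"
  using sig
proof (induction sig)
  case Nil
  then show ?case
    using v by (simp add: ev_def)
next
  case (Cons j sig)
  then have "fst (s ! (j - 1)) \<in> R" "fst (ev cor s sig v) \<in> R"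
    using s by (auto simp: affine_roots_iff)
  then show ?case
    using refl_closed by (simp add: ev_def affine_roots_iff fst_act)
qed

lemma reflX_self: "pair a (cor a) = 2 \<Longrightarrow> reflX cor a a = (\<lambda>i. - a i)"
  by (simp add: reflX_def fun_eq_iff)

lemma Shat_in_affine_roots:
  assumes "Pi \<subseteq> R" "g \<in> R" "(\<lambda>i. - g i) \<in> R" "t \<in> Shat Pi g"
  shows "fst t \<in> R \<and> sroot g t \<in> affine_roots R"
  using assms by (auto simp: Shat_def sroot_def affine_roots_iff)

lemma Erev_Xrev_eq_Prev_image:
  fixes R :: "('i::{finite,linorder} \<Rightarrow> int) set"
  assumes two: "(2::('i,'T::idom) ST fract) \<noteq> 0"
    and refl_closed: "\<forall>a\<in>R. \<forall>b\<in>R. reflX cor a b \<in> R"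
    and nz: "\<forall>a\<in>affine_roots R. (iota a :: ('i,'T) ST) \<noteq> 0"
    and rs: "\<forall>t\<in>set rs. fst t \<in> R \<and> sroot g t \<in> affine_roots R"
  shows "(Erev g cor rs :: ('i,'T) vec set) = Prev g cor rs ` Frev g cor rs
       \<and> (Xrev g cor rs :: ('i,'T) vec set) = Prev g cor rs ` Yrev g cor rs"
  using rs
proof (induction rs)
  case Nil
  then show ?case
    by simp
next
  case (Cons t rs)
  have nz_Cons: "\<forall>sig\<in>Iset (Suc (length rs)). emb (iota (ev cor (rev (t # rs)) sig (sroot g t)) :: ('i,'T) ST) \<noteq> 0"
  proof
    fix sig
    assume "sig \<in> Iset (Suc (length rs))"
    have "ev cor (rev (t # rs)) sig (sroot g t) \<in> affine_roots R"
      using \<open>sig \<in> Iset (Suc (length rs))\<close> Cons.prems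
      by (intro ev_in_affine_roots[OF refl_closed]) (auto simp: Iset_def)
    then show "emb (iota (ev cor (rev (t # rs)) sig (sroot g t)) :: ('i,'T) ST) \<noteq> 0"
      using nz by (simp add: emb_neq_zero)
  qed
  have IH_E: "(Erev g cor rs :: ('i,'T) vec set) = Prev g cor rs ` Frev g cor rs"
    and IH_X: "(Xrev g cor rs :: ('i,'T) vec set) = Prev g cor rs ` Yrev g cor rs"
    using Cons by simp_all
  show ?case
    using Erev_Cons_eq_Prev_image[OF two nz_Cons IH_E] Xrev_Cons_eq_Prev_image[OF two nz_Cons IH_X]
    by (rule conjI)
qed

theorem lemma6p13:
  fixes R Pi :: "('i::{finite,linorder} \<Rightarrow> int) set"
    and cor :: "('i \<Rightarrow> int) \<Rightarrow> ('i \<Rightarrow> int)"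
    and g :: "'i \<Rightarrow> int"
    and s :: "(('i \<Rightarrow> int) \<times> int) list"
  assumes "irreducible_reduced_root_datum R cor"
    and "is_base R Pi"
    and "highest_root R Pi g"
    and "(2::'T::idom) \<noteq> 0"
    and "\<forall>a\<in>affine_roots R. (iota a :: ('i, 'T) ST) \<noteq> 0"
    and "set s \<subseteq> Shat Pi g"
  shows "(ET g cor s :: ('i, 'T) vec set) = P g cor s ` FT g cor s
       \<and> (XT g cor s :: ('i, 'T) vec set) = P g cor s ` YT g cor s"
proof -
  have refl_closed: "\<forall>a\<in>R. \<forall>b\<in>R. reflX cor a b \<in> R"
    and pair_coroot: "\<forall>a\<in>R. pair a (cor a) = 2"
    using assms(1) by (simp_all add: irreducible_reduced_root_datum_def)
  have Pi: "Pi \<subseteq> R" and g: "g \<in> R"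
    using assms(2,3) by (simp_all add: is_base_def highest_root_def pos_roots_def)
  have "reflX cor g g = (\<lambda>i. - g i)"
    using pair_coroot g by (simp add: reflX_self)
  then have minus_g: "(\<lambda>i. - g i) \<in> R"
    using refl_closed g by metis
  have "\<forall>t\<in>set (rev s). fst t \<in> R \<and> sroot g t \<in> affine_roots R"
    using assms(6) Shat_in_affine_roots[OF Pi g minus_g] by auto
  then show ?thesis
    unfolding ET_def FT_def XT_def YT_def P_def
    by (rule Erev_Xrev_eq_Prev_image[OF two_neq_zero_fract_ST[OF assms(4)] refl_closed assms(5)])
qed

end
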